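(* Let $(c_n)_{n\ge0}$ be a sequence (of elements of a commutative ring, or indeterminates) and $\alpha,\beta$ variables. Then for all positive integers $n$, $$ \det_{0\le i,j\le n-1}\big(\alpha c_{i+j}+c_{i+j+1}\big)\det_{0\le i,j\le n-1}\big(\beta c_{i+j}+c_{i+j+1}\big) =-\det_{0\le i,j\le n}\big(c_{i+j}\big)\det_{0\le i,j\le n-2}\big(\alpha\beta c_{i+j}+(\alpha+\beta)c_{i+j+1}+c_{i+j+2}\big) +\det_{0\le i,j\le n-1}\big(c_{i+j}\big)\det_{0\le i,j\le n-1}\big(\alpha\beta c_{i+j}+(\alpha+\beta)c_{i+j+1}+c_{i+j+2}\big). $$
   Context: The determinant of an empty ($0\times 0$) matrix equals $1$. *)

theory Defs
  imports "Jordan_Normal_Form.Determinant"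
begin

text \<open>Hankel determinant: det of the m x m matrix (f (i+j)) for 0 <= i,j <= m-1.
  For m = 0 this is the determinant of the empty matrix, which is 1.\<close>
definition hdet :: "nat \<Rightarrow> (nat \<Rightarrow> 'a::comm_ring_1) \<Rightarrow> 'a" where
  "hdet m f = det (mat m m (\<lambda>(i,j). f (i + j)))"

end

theory Submission
  imports Defs "Jordan_Normal_Form.Char_Poly"
begin

text \<open>
  Let G_k = \<alpha>\<beta> c_k + (\<alpha>+\<beta>) c_(k+1) + c_(k+2), g_k = \<alpha> c_k + c_(k+1) and
  h_k = \<beta> c_k + c_(k+1), and let Y be the (n+1) x (n+1) matrix with Hankel block (G_(i+j)),
  last column (h_i), last row (g_j) and corner c_0. Replacing column j of (c_(i+j)) by
  \<alpha> (column j) + (column j+1) for j < n and moving column 0 to the end, and then doing the same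
  with the rows and \<beta>, turns the Hankel matrix of c into Y; the two signs (-1)^n cancel, so
  det Y = hdet (n+1) c. The Desnanot-Jacobi identity for the last two rows and columns of Y is
  the theorem: the minors are the matrix Y of size n, the Hankel matrices of G of sizes n and
  n-1, and, by one more column resp. row operation, the Hankel matrices of h and g up to the
  sign (-1)^(n-1).

  Desnanot-Jacobi holds over any commutative ring: multiplying M by the identity matrix whose
  last two columns are replaced by those of adj M gives
  det M * (2 x 2 minor of adj M) = (det M)^2 * det (leading block),
  and det M can be cancelled after passing to the generic matrix x I + M, whose determinant is
  a monic polynomial.
\<close>

lemma laplace_expansion_column_single:
  fixes B :: "'a::comm_ring_1 mat"
  assumes B: "B \<in> carrier_mat n n" and j: "j < n" and r: "r < n"
    and zero: "\<And>i. i < n \<Longrightarrow> i \<noteq> r \<Longrightarrow> B $$ (i,j) = 0"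
  shows "det B = B $$ (r,j) * cofactor B r j"
proof -
  have "det B = (\<Sum>i<n. B $$ (i,j) * cofactor B i j)"
    by (rule laplace_expansion_column[OF B j])
  also have "\<dots> = B $$ (r,j) * cofactor B r j"
    using r zero by (subst sum.remove[of _ r]) (auto intro!: sum.neutral)
  finally show ?thesis .
qed

lemma det_mat_last_col_single:
  fixes f :: "nat \<times> nat \<Rightarrow> 'a::comm_ring_1"
  assumes "\<And>i. i < m \<Longrightarrow> f (i, m) = 0"
  shows "det (mat (Suc m) (Suc m) f) = f (m, m) * det (mat m m f)"
proof -
  have "det (mat (Suc m) (Suc m) f) = f (m, m) * cofactor (mat (Suc m) (Suc m) f) m m"
    using assms by (subst laplace_expansion_column_single[of _ "Suc m" m m]) auto
  moreover have "mat_delete (mat (Suc m) (Suc m) f) m m = mat m m f"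
    by (rule eq_matI) (auto simp: mat_delete_def)
  ultimately show ?thesis by (simp add: cofactor_def)
qed

lemma det_mat_first_col_single:
  fixes f :: "nat \<times> nat \<Rightarrow> 'a::comm_ring_1"
  assumes "\<And>i. 0 < i \<Longrightarrow> i \<le> m \<Longrightarrow> f (i, 0) = 0"
  shows "det (mat (Suc m) (Suc m) f) = f (0, 0) * det (mat m m (\<lambda>(i,j). f (Suc i, Suc j)))"
proof -
  have "det (mat (Suc m) (Suc m) f) = f (0, 0) * cofactor (mat (Suc m) (Suc m) f) 0 0"
    using assms by (subst laplace_expansion_column_single[of _ "Suc m" 0 0]) auto
  moreover have "mat_delete (mat (Suc m) (Suc m) f) 0 0 = mat m m (\<lambda>(i,j). f (Suc i, Suc j))"
    by (rule eq_matI) (auto simp: mat_delete_def)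
  ultimately show ?thesis by (simp add: cofactor_def)
qed

lemma det_mat_2:
  fixes f :: "nat \<times> nat \<Rightarrow> 'a::comm_ring_1"
  shows "det (mat 2 2 f) = f (0,0) * f (1,1) - f (0,1) * f (1,0)"
proof -
  let ?A = "mat 2 2 f"
  have "det ?A = (\<Sum>i<2. ?A $$ (i,0) * cofactor ?A i 0)"
    by (rule laplace_expansion_column) auto
  also have "\<dots> = f (0,0) * cofactor ?A 0 0 + f (1,0) * cofactor ?A 1 0"
    by (simp add: numeral_2_eq_2)
  also have "cofactor ?A 0 0 = f (1,1)"
    by (simp add: cofactor_def det_single mat_delete_def)
  also have "cofactor ?A 1 0 = - f (0,1)"
    by (simp add: cofactor_def det_single mat_delete_def)
  finally show ?thesis by (simp add: algebra_simps)
qed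

lemma det_mat_last_two_cols_diag:
  fixes f :: "nat \<Rightarrow> nat \<Rightarrow> 'a::comm_ring_1"
  shows "det (mat (k+2) (k+2) (\<lambda>(i,j). if k \<le> j then (if i = j then d else 0) else f i j))
    = d * d * det (mat k k (\<lambda>(i,j). f i j))"
proof -
  let ?g = "\<lambda>(i,j). if k \<le> j then (if i = j then d else 0) else f i j"
  have "det (mat (Suc (Suc k)) (Suc (Suc k)) ?g) = d * (d * det (mat k k ?g))"
    by (subst det_mat_last_col_single, simp, subst det_mat_last_col_single) auto
  moreover have "mat k k ?g = mat k k (\<lambda>(i,j). f i j)"
    by (rule eq_matI) auto
  ultimately show ?thesis by simp
qed

lemma det_mat_identity_but_last_two_cols:
  fixes f :: "nat \<Rightarrow> nat \<Rightarrow> 'a::comm_ring_1"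
  shows "det (mat (k+2) (k+2) (\<lambda>(i,j). if k \<le> j then f i j else if i = j then 1 else 0))
    = f k k * f (k+1) (k+1) - f k (k+1) * f (k+1) k"
proof (induction k arbitrary: f)
  case 0
  show ?case using det_mat_2[of "\<lambda>(i,j). f i j"] by (simp add: numeral_2_eq_2)
next
  case (Suc k)
  let ?g = "\<lambda>(i,j). if Suc k \<le> j then f i j else if i = j then 1 else 0"
  have "det (mat (Suc (k+2)) (Suc (k+2)) ?g) = det (mat (k+2) (k+2) (\<lambda>(i,j). ?g (Suc i, Suc j)))"
    by (subst det_mat_first_col_single) auto
  also have "mat (k+2) (k+2) (\<lambda>(i,j). ?g (Suc i, Suc j))
    = mat (k+2) (k+2) (\<lambda>(i,j). if k \<le> j then f (Suc i) (Suc j) else if i = j then 1 else 0)"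
    by (rule eq_matI) auto
  finally show ?case using Suc.IH[of "\<lambda>i j. f (Suc i) (Suc j)"] by simp
qed

lemma mat_mult_replace_last_cols:
  fixes M B :: "'a::comm_ring_1 mat"
  assumes M: "M \<in> carrier_mat n n" and B: "B \<in> carrier_mat n n"
  shows "M * mat n n (\<lambda>(i,j). if k \<le> j then B $$ (i,j) else if i = j then 1 else 0)
    = mat n n (\<lambda>(i,j). if k \<le> j then (M * B) $$ (i,j) else M $$ (i,j))"
    (is "M * ?N = ?R")
proof (rule eq_matI)
  fix i j assume "i < dim_row ?R" "j < dim_col ?R"
  then have ij: "i < n" "j < n" by auto
  then have "col ?N j = (if k \<le> j then col B j else unit_vec n j)"
    using B by (auto simp: unit_vec_def)
  then show "(M * ?N) $$ (i,j) = ?R $$ (i,j)"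
    using ij M B by (simp add: row_def)
qed (use M in auto)

lemma det_mult_desnanot_jacobi:
  fixes M :: "'a::comm_ring_1 mat"
  assumes M: "M \<in> carrier_mat (k+2) (k+2)"
  shows "det M * (det (mat_delete M k k) * det (mat_delete M (k+1) (k+1))
            - det (mat_delete M (k+1) k) * det (mat_delete M k (k+1)))
       = det M * (det M * det (mat k k (\<lambda>(i,j). M $$ (i,j))))"
proof -
  define A where "A = adj_mat M"
  have A: "A \<in> carrier_mat (k+2) (k+2)" and MA: "M * A = det M \<cdot>\<^sub>m 1\<^sub>m (k+2)"
    using adj_mat[OF M] by (simp_all add: A_def)
  define N where "N = mat (k+2) (k+2) (\<lambda>(i,j). if k \<le> j then A $$ (i,j) else if i = j then 1 else 0)"
  have "M * N = mat (k+2) (k+2) (\<lambda>(i,j). if k \<le> j then (if i = j then det M else 0) else M $$ (i,j))"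
    unfolding N_def mat_mult_replace_last_cols[OF M A] MA by (rule eq_matI) auto
  then have "det (M * N) = det M * det M * det (mat k k (\<lambda>(i,j). M $$ (i,j)))"
    by (simp only: det_mat_last_two_cols_diag)
  moreover have "det (M * N) = det M * det N"
    by (rule det_mult[OF M]) (simp add: N_def)
  moreover have "det N = A $$ (k,k) * A $$ (k+1,k+1) - A $$ (k,k+1) * A $$ (k+1,k)"
    unfolding N_def by (rule det_mat_identity_but_last_two_cols)
  moreover have "A $$ (k,k) = det (mat_delete M k k)" "A $$ (k+1,k+1) = det (mat_delete M (k+1) (k+1))"
    "A $$ (k,k+1) = - det (mat_delete M (k+1) k)" "A $$ (k+1,k) = - det (mat_delete M k (k+1))"
    using M by (auto simp: A_def adj_mat_def cofactor_def)
  ultimately show ?thesis by (simp add: algebra_simps)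
qed

lemma monic_mult_left_cancel:
  fixes p q r :: "'a::comm_ring_1 poly"
  assumes monic: "lead_coeff p = 1" and eq: "p * q = p * r"
  shows "q = r"
proof (rule ccontr)
  assume "q \<noteq> r"
  then have "lead_coeff (q - r) \<noteq> 0" by (intro leading_coeff_neq_0) simp
  moreover have "coeff (p * (q - r)) (degree p + degree (q - r)) = lead_coeff (q - r)"
    using coeff_mult_degree_sum[of p "q - r"] monic by simp
  moreover have "p * (q - r) = 0" using eq by (simp add: algebra_simps)
  ultimately show False by (metis coeff_0)
qed

lemma map_mat_delete: "map_mat f (mat_delete A i j) = mat_delete (map_mat f A) i j"
  by (rule eq_matI) (auto simp: mat_delete_def)

lemma desnanot_jacobi:
  fixes M :: "'a::comm_ring_1 mat"
  assumes M: "M \<in> carrier_mat (k+2) (k+2)"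
  shows "det (mat_delete M k k) * det (mat_delete M (k+1) (k+1))
            - det (mat_delete M (k+1) k) * det (mat_delete M k (k+1))
       = det M * det (mat k k (\<lambda>(i,j). M $$ (i,j)))"
proof -
  \<comment> \<open>X = x I + M\<close>
  define X where "X = char_poly_matrix (map_mat uminus M)"
  have X: "X \<in> carrier_mat (k+2) (k+2)" using M by (simp add: X_def)
  have "lead_coeff (det X) = 1"
    using degree_monic_char_poly[of "map_mat uminus M" "k+2"] M by (simp add: X_def char_poly_def)
  from monic_mult_left_cancel[OF this det_mult_desnanot_jacobi[OF X]]
  have X_eq: "det (mat_delete X k k) * det (mat_delete X (k+1) (k+1))
            - det (mat_delete X (k+1) k) * det (mat_delete X k (k+1))
       = det X * det (mat k k (\<lambda>(i,j). X $$ (i,j)))" .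
  have eval0: "comm_ring_hom (\<lambda>p::'a poly. poly p 0)" by unfold_locales auto
  have X0: "map_mat (\<lambda>p. poly p 0) X = M"
    using M by (auto simp: X_def char_poly_matrix_def)
  have "map_mat (\<lambda>p. poly p 0) (mat k k (\<lambda>(i,j). X $$ (i,j))) = mat k k (\<lambda>(i,j). M $$ (i,j))"
    using X by (auto simp: X0[symmetric])
  then show ?thesis
    using arg_cong[OF X_eq, of "\<lambda>p. poly p 0"]
    by (simp add: comm_ring_hom.hom_det[OF eval0, symmetric] map_mat_delete X0)
qed

lemma det_mat_shift_comb_cols:
  fixes F :: "nat \<Rightarrow> nat \<Rightarrow> 'a::comm_ring_1"
  assumes N: "N \<ge> 1"
  shows "det (mat N N (\<lambda>(i,j). if j < N-1 then a * F i j + F i (j+1) else F i 0))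
     = (-1)^(N-1) * det (mat N N (\<lambda>(i,j). F i j))"
proof -
  define Q :: "'a mat" where "Q = mat N N (\<lambda>(l,j).
    if j < N-1 then (if l = j then a else if l = j+1 then 1 else 0) else (if l = 0 then 1 else 0))"
  have Q: "Q \<in> carrier_mat N N" by (simp add: Q_def)
  have comb: "(\<Sum>l<N. F i l * (if l = j then a else if l = j+1 then 1 else 0)) = a * F i j + F i (j+1)"
    if "j < N-1" for i j
    using that by (simp add: if_distrib[of "\<lambda>x. F _ _ * x"] sum.If_cases lessThan_def
        mult.commute cong: if_cong)
  have first: "(\<Sum>l<N. F i l * (if l = 0 then 1 else 0)) = F i 0" for i
    using N by (simp add: if_distrib[of "\<lambda>x. F _ _ * x"] cong: if_cong)
  have prod: "mat N N (\<lambda>(i,j). if j < N-1 then a * F i j + F i (j+1) else F i 0)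
      = mat N N (\<lambda>(i,j). F i j) * Q"
    by (rule eq_matI)
      (auto simp: Q_def scalar_prod_def atLeast0LessThan comb first simp del: One_nat_def)
  have "det Q = Q $$ (0, N-1) * cofactor Q 0 (N-1)"
    by (rule laplace_expansion_column_single[OF Q]) (use N in \<open>auto simp: Q_def\<close>)
  also have "\<dots> = (-1)^(N-1) * det (mat_delete Q 0 (N-1))"
    using N by (simp add: Q_def cofactor_def)
  also have "det (mat_delete Q 0 (N-1)) = 1"
    by (subst det_upper_triangular[of _ "N-1"])
      (auto simp: upper_triangular_def Q_def mat_delete_def prod_list_diag_prod)
  finally show ?thesis
    unfolding prod by (subst det_mult[OF _ Q]) (auto simp: mult.commute)
qed

lemma det_mat_shift_comb_rows:
  fixes F :: "nat \<Rightarrow> nat \<Rightarrow> 'a::comm_ring_1"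
  assumes N: "N \<ge> 1"
  shows "det (mat N N (\<lambda>(i,j). if i < N-1 then a * F i j + F (i+1) j else F 0 j))
     = (-1)^(N-1) * det (mat N N (\<lambda>(i,j). F i j))"
proof -
  have "mat N N (\<lambda>(i,j). if i < N-1 then a * F i j + F (i+1) j else F 0 j)
    = (mat N N (\<lambda>(i,j). if j < N-1 then a * F j i + F (j+1) i else F 0 i))\<^sup>T"
    by (rule eq_matI) auto
  moreover have "mat N N (\<lambda>(i,j). F i j) = (mat N N (\<lambda>(i,j). F j i))\<^sup>T"
    by (rule eq_matI) auto
  ultimately show ?thesis
    using det_mat_shift_comb_cols[OF N, of a "\<lambda>i j. F j i"]
    by (simp add: det_transpose[OF mat_carrier])
qed

definition shift_comb :: "'a::comm_ring_1 \<Rightarrow> (nat \<Rightarrow> 'a) \<Rightarrow> nat \<Rightarrow> 'a" where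
  "shift_comb a c = (\<lambda>k. a * c k + c (k+1))"

definition border_hankel :: "'a::comm_ring_1 \<Rightarrow> 'a \<Rightarrow> (nat \<Rightarrow> 'a) \<Rightarrow> nat \<Rightarrow> 'a mat" where
  "border_hankel a b c N = mat (N+1) (N+1) (\<lambda>(i,j).
     if i < N \<and> j < N then shift_comb b (shift_comb a c) (i+j)
     else if i < N then shift_comb b c i
     else if j < N then shift_comb a c j
     else c 0)"

lemma det_border_hankel: "det (border_hankel a b c N) = hdet (N+1) c"
proof -
  define F where "F = (\<lambda>i j. if j < N then shift_comb a c (i+j) else c i)"
  have "mat (N+1) (N+1) (\<lambda>(i,j). F i j)
      = mat (N+1) (N+1) (\<lambda>(i,j). if j < N+1-1 then a * c (i+j) + c (i+(j+1)) else c (i+0))"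
    by (rule eq_matI) (auto simp: F_def shift_comb_def)
  then have "det (mat (N+1) (N+1) (\<lambda>(i,j). F i j)) = (-1)^N * hdet (N+1) c"
    using det_mat_shift_comb_cols[of "N+1" a "\<lambda>i j. c (i+j)"] by (simp add: hdet_def)
  moreover have "border_hankel a b c N
      = mat (N+1) (N+1) (\<lambda>(i,j). if i < N then b * F i j + F (i+1) j else F 0 j)"
    by (rule eq_matI) (auto simp: border_hankel_def F_def shift_comb_def algebra_simps)
  ultimately show ?thesis
    using det_mat_shift_comb_rows[of "N+1" b F] by simp
qed

lemma mat_delete_border_hankel_Suc:
  "mat_delete (border_hankel a b c (Suc N)) N N = border_hankel a b c N"
  by (rule eq_matI) (auto simp: border_hankel_def mat_delete_def)

lemma det_border_hankel_delete_border:
  "det (mat_delete (border_hankel a b c N) N N) = hdet N (shift_comb b (shift_comb a c))"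
proof -
  have "mat_delete (border_hankel a b c N) N N
      = mat N N (\<lambda>(i,j). shift_comb b (shift_comb a c) (i+j))"
    by (rule eq_matI) (auto simp: border_hankel_def mat_delete_def)
  then show ?thesis by (simp add: hdet_def)
qed

lemma det_border_hankel_leading:
  assumes "k \<le> N"
  shows "det (mat k k (\<lambda>(i,j). border_hankel a b c N $$ (i,j)))
    = hdet k (shift_comb b (shift_comb a c))"
proof -
  have "mat k k (\<lambda>(i,j). border_hankel a b c N $$ (i,j))
      = mat k k (\<lambda>(i,j). shift_comb b (shift_comb a c) (i+j))"
    using assms by (auto simp: border_hankel_def)
  then show ?thesis by (simp add: hdet_def)
qed

lemma det_border_hankel_delete_border_row:
  assumes N: "N \<ge> 1"
  shows "det (mat_delete (border_hankel a b c N) N (N-1)) = (-1)^(N-1) * hdet N (shift_comb b c)"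
proof -
  have "mat_delete (border_hankel a b c N) N (N-1) = mat N N (\<lambda>(i,j).
      if j < N-1 then a * shift_comb b c (i+j) + shift_comb b c (i+(j+1)) else shift_comb b c (i+0))"
    using N by (intro eq_matI) (auto simp: border_hankel_def mat_delete_def shift_comb_def algebra_simps)
  then show ?thesis
    using det_mat_shift_comb_cols[OF N, of a "\<lambda>i j. shift_comb b c (i+j)"] by (simp add: hdet_def)
qed

lemma det_border_hankel_delete_border_col:
  assumes N: "N \<ge> 1"
  shows "det (mat_delete (border_hankel a b c N) (N-1) N) = (-1)^(N-1) * hdet N (shift_comb a c)"
proof -
  have "mat_delete (border_hankel a b c N) (N-1) N = mat N N (\<lambda>(i,j).
      if i < N-1 then b * shift_comb a c (i+j) + shift_comb a c (i+1+j) else shift_comb a c (0+j))"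
    using N by (intro eq_matI) (auto simp: border_hankel_def mat_delete_def shift_comb_def algebra_simps)
  then show ?thesis
    using det_mat_shift_comb_rows[OF N, of b "\<lambda>i j. shift_comb a c (i+j)"] by (simp add: hdet_def)
qed

theorem lemma9:
  fixes c :: "nat \<Rightarrow> 'a::comm_ring_1" and \<alpha> \<beta> :: 'a and n :: nat
  assumes "n \<ge> 1"
  shows "hdet n (\<lambda>k. \<alpha> * c k + c (k+1)) * hdet n (\<lambda>k. \<beta> * c k + c (k+1))
       = - hdet (n+1) c * hdet (n-1) (\<lambda>k. \<alpha> * \<beta> * c k + (\<alpha> + \<beta>) * c (k+1) + c (k+2))
         + hdet n c * hdet n (\<lambda>k. \<alpha> * \<beta> * c k + (\<alpha> + \<beta>) * c (k+1) + c (k+2))"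
proof -
  obtain k where n: "n = Suc k" using assms by (cases n) auto
  let ?Y = "border_hankel \<alpha> \<beta> c n"
  let ?G = "shift_comb \<beta> (shift_comb \<alpha> c)"
  have Y: "?Y \<in> carrier_mat (k+2) (k+2)" by (simp add: border_hankel_def n)
  have minors:
    "det (mat_delete ?Y k k) = hdet n c"
    "det (mat_delete ?Y (k+1) (k+1)) = hdet n ?G"
    "det (mat_delete ?Y (k+1) k) = (-1)^(n-1) * hdet n (shift_comb \<beta> c)"
    "det (mat_delete ?Y k (k+1)) = (-1)^(n-1) * hdet n (shift_comb \<alpha> c)"
    "det (mat k k (\<lambda>(i,j). ?Y $$ (i,j))) = hdet (n-1) ?G"
    using det_border_hankel_delete_border[of \<alpha> \<beta> c n]
      det_border_hankel_delete_border_row[OF assms, of \<alpha> \<beta> c]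
      det_border_hankel_delete_border_col[OF assms, of \<alpha> \<beta> c]
      det_border_hankel_leading[of k n \<alpha> \<beta> c]
    by (simp_all add: n mat_delete_border_hankel_Suc det_border_hankel)
  have "hdet n c * hdet n ?G
      - ((-1)^(n-1) * (-1)^(n-1)) * (hdet n (shift_comb \<beta> c) * hdet n (shift_comb \<alpha> c))
      = hdet (n+1) c * hdet (n-1) ?G"
    using desnanot_jacobi[OF Y] unfolding minors det_border_hankel by (simp add: algebra_simps)
  moreover have "(-1::'a)^(n-1) * (-1)^(n-1) = 1"
    by (simp flip: power_mult_distrib)
  ultimately show ?thesis
    by (simp add: shift_comb_def algebra_simps)
qed

end
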